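(* For any system $\mathcal{G}$, if $\mathcal{G}\models\mathit{NDS}$ then $\mathcal{G}\models\mathit{GNI}$, where $\mathit{NDS}:=\neg\Big(\exists\pi_1.\langle\langle\{\xi_H\}\rangle\rangle\pi_2.\ \square\big(\bigwedge_{a\in L}a_{\pi_1}\leftrightarrow a_{\pi_2}\big)\rightarrow\lozenge\big(\bigvee_{a\in O}a_{\pi_1}\not\leftrightarrow a_{\pi_2}\big)\Big)$ and $\mathit{GNI}:=\forall\pi_1.\forall\pi_2.\exists\pi_3.\ \square\big(\bigwedge_{a\in H}a_{\pi_1}\leftrightarrow a_{\pi_3}\big)\wedge\square\big(\bigwedge_{a\in O}a_{\pi_2}\leftrightarrow a_{\pi_3}\big)$.
   Context: A multi-stage concurrent game structure (MSCGS) is $\mathcal{G}=(S,s_0,\Xi,\mathscr{M},\delta,d,\mathbf{AP},\ell)$: finite states $S$, initial state $s_0$, finite agents $\Xi$, finite moves $\mathscr{M}$, transition function $\delta:S\times(\Xi\to\mathscr{M})\to S$, stage function $d:\Xi\to\mathbb{N}$, atomic propositions $\mathbf{AP}$, labelling $\ell:S\to2^{\mathbf{AP}}$. A system here is an MSCGS with agents $\xi_N$ (non-determinism), $\xi_H$ (high-security inputs) and $\xi_L$ (low-security inputs), where $\mathbf{AP}$ contains pairwise disjoint sets $H$ (high inputs), $L$ (low inputs), $O$ (outputs), and the move of $\xi_H$ (resp. $\xi_L$) determines the values of the propositions in $H$ (resp. $L$) in the next state. In $\mathit{NDS}$ the implication is inside the scope of both quantifiers. Semantics of $\texttt{HyperATL}^*$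 used here: a strategy for agent $\xi$ is $f_\xi:S^+\times(\{\xi'\mid d(\xi')<d(\xi)\}\to\mathscr{M})\to\mathscr{M}$; for $A\subseteq\Xi$, strategies $F_A$ and state $s$, $\mathit{out}(\mathcal{G},s,F_A)$ is the set of $u\in S^\omega$ with $u(0)=s$ such that for all $i$ there is a global move vector $\sigma$ with $\delta(u(i),\sigma)=u(i+1)$ and $\sigma(\xi)=f_\xi(u[0,i],\sigma_{\mid\{\xi'\mid d(\xi')<d(\xi)\}})$ for all $\xi\in A$. For a path assignment $\Pi$, $\Pi\models\langle\langle A\rangle\rangle\pi.\varphi$ iff there exist $F_A$ such that for all $t\in\mathit{out}(\mathcal{G},\Pi(\epsilon)(0),F_A)$, $\Pi[\pi\mapsto t]\models\varphi$, where $\Pi(\epsilon)$ is the most recently added path ($\Pi(\epsilon)(0)=s_0$ if $\Pi$ is empty); $\forall\pi=\langle\langle\emptyset\rangle\rangle\pi$, $\exists\pi=\langle\langle\Xi\rangle\rangle\pi$; $a_\pi$ holds iff $a\in\ell$ of the current state of the path bound to $\pi$; temporal operators are interpreted synchronously; $\neg$ is negation. $\mathcal{G}\models\varphi$ iff the empty assignment satisfies $\varphi$. *)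

theory Defs
  imports Main
begin

text \<open>Multi-stage concurrent game structures. States, agents and moves are
  finite types (S, Xi, M are their universes); a global move vector is a total
  function from agents to moves.\<close>

record ('s, 'ag, 'm, 'ap) mscgs =
  init  :: "'s"
  trans :: "'s \<Rightarrow> ('ag \<Rightarrow> 'm) \<Rightarrow> 's"
  stage :: "'ag \<Rightarrow> nat"
  lab   :: "'s \<Rightarrow> 'ap set"

text \<open>A strategy maps a nonempty history (a list of states) and the moves of
  the agents of strictly lower stage (a partial move vector, undefined = None)
  to a move.\<close>
type_synonym ('s, 'ag, 'm) strategy = "'s list \<Rightarrow> ('ag \<Rightarrow> 'm option) \<Rightarrow> 'm"

definition lower_moves :: "('s,'ag,'m,'ap) mscgs \<Rightarrow> 'ag \<Rightarrow> ('ag \<Rightarrow> 'm) \<Rightarrow> ('ag \<Rightarrow> 'm option)" where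
  "lower_moves G x \<sigma> = (\<lambda>x'. if stage G x' < stage G x then Some (\<sigma> x') else None)"

definition out :: "('s::finite,'ag::finite,'m::finite,'ap) mscgs \<Rightarrow> 's \<Rightarrow> 'ag set
                   \<Rightarrow> ('ag \<Rightarrow> ('s,'ag,'m) strategy) \<Rightarrow> (nat \<Rightarrow> 's) set" where
  "out G s A F = {u. u 0 = s \<and>
     (\<forall>i. \<exists>\<sigma>. trans G (u i) \<sigma> = u (Suc i) \<and>
        (\<forall>x\<in>A. \<sigma> x = F x (map u [0..<Suc i]) (lower_moves G x \<sigma>)))}"

text \<open>Path assignments: list of paths, most recently added path first.\<close>
type_synonym 's passign = "(nat \<Rightarrow> 's) list"

definition recent_start :: "('s,'ag,'m,'ap) mscgs \<Rightarrow> 's passign \<Rightarrow> 's" where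
  "recent_start G \<Pi> = (case \<Pi> of [] \<Rightarrow> init G | t # _ \<Rightarrow> t 0)"

text \<open>Strategy quantifier  <<A>> pi. phi  (shallow embedding: phi is a predicate
  on path assignments).\<close>
definition strat_q :: "('s::finite,'ag::finite,'m::finite,'ap) mscgs \<Rightarrow> 'ag set
                       \<Rightarrow> ('s passign \<Rightarrow> bool) \<Rightarrow> 's passign \<Rightarrow> bool" where
  "strat_q G A \<phi> \<Pi> = (\<exists>F. \<forall>t\<in>out G (recent_start G \<Pi>) A F. \<phi> (t # \<Pi>))"

definition forall_q :: "('s::finite,'ag::finite,'m::finite,'ap) mscgs
                       \<Rightarrow> ('s passign \<Rightarrow> bool) \<Rightarrow> 's passign \<Rightarrow> bool" where
  "forall_q G \<phi> = strat_q G {} \<phi>"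

definition exists_q :: "('s::finite,'ag::finite,'m::finite,'ap) mscgs
                       \<Rightarrow> ('s passign \<Rightarrow> bool) \<Rightarrow> 's passign \<Rightarrow> bool" where
  "exists_q G \<phi> = strat_q G UNIV \<phi>"

definition is_system :: "('s::finite,'ag::finite,'m::finite,'ap) mscgs
   \<Rightarrow> 'ag \<Rightarrow> 'ag \<Rightarrow> 'ag \<Rightarrow> 'ap set \<Rightarrow> 'ap set \<Rightarrow> 'ap set \<Rightarrow> bool" where
  "is_system G xN xH xL H L Obs \<longleftrightarrow>
     distinct [xN, xH, xL] \<and> (UNIV :: 'ag set) = {xN, xH, xL} \<and>
     H \<inter> L = {} \<and> H \<inter> Obs = {} \<and> L \<inter> Obs = {} \<and>
     (\<exists>g. \<forall>s \<sigma>. lab G (trans G s \<sigma>) \<inter> H = g (\<sigma> xH)) \<and>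
     (\<exists>g. \<forall>s \<sigma>. lab G (trans G s \<sigma>) \<inter> L = g (\<sigma> xL))"

text \<open>G |= NDS  (pi_2 is the head of the assignment, pi_1 the second entry).\<close>
definition models_NDS :: "('s::finite,'ag::finite,'m::finite,'ap) mscgs
   \<Rightarrow> 'ag \<Rightarrow> 'ap set \<Rightarrow> 'ap set \<Rightarrow> bool" where
  "models_NDS G xH L Obs \<longleftrightarrow>
     \<not> exists_q G (strat_q G {xH} (\<lambda>\<Pi>.
         let t1 = \<Pi> ! 1; t2 = \<Pi> ! 0 in
         (\<forall>i. \<forall>a\<in>L. (a \<in> lab G (t1 i)) = (a \<in> lab G (t2 i))) \<longrightarrow>
         (\<exists>i. \<exists>a\<in>Obs. (a \<in> lab G (t1 i)) \<noteq> (a \<in> lab G (t2 i))))) []"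

text \<open>G |= GNI  (pi_3 head, pi_2 second, pi_1 third).\<close>
definition models_GNI :: "('s::finite,'ag::finite,'m::finite,'ap) mscgs
   \<Rightarrow> 'ap set \<Rightarrow> 'ap set \<Rightarrow> bool" where
  "models_GNI G H Obs \<longleftrightarrow>
     forall_q G (forall_q G (exists_q G (\<lambda>\<Pi>.
         let t1 = \<Pi> ! 2; t2 = \<Pi> ! 1; t3 = \<Pi> ! 0 in
         (\<forall>i. \<forall>a\<in>H. (a \<in> lab G (t1 i)) = (a \<in> lab G (t3 i))) \<and>
         (\<forall>i. \<forall>a\<in>Obs. (a \<in> lab G (t2 i)) = (a \<in> lab G (t3 i)))))) []"

end

theory Submission
  imports Defs
begin

text \<open>Fix two paths p1, p2 from the initial state. The existential player can
  force exactly p2 by replaying its move vectors, so NDS applied to p2 says that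
  against every strategy of xH some outcome agrees with p2 on the low inputs and
  on the outputs. Let xH replay its moves along p1: since these moves determine
  the high inputs of the next state, that outcome also agrees with p1 on the
  high inputs, and it is the witness required by GNI.\<close>

definition is_path :: "('s,'ag,'m,'ap) mscgs \<Rightarrow> (nat \<Rightarrow> 's) \<Rightarrow> bool" where
  "is_path G u \<longleftrightarrow> (\<forall>i. \<exists>\<sigma>. trans G (u i) \<sigma> = u (Suc i))"

definition path_moves :: "('s,'ag,'m,'ap) mscgs \<Rightarrow> (nat \<Rightarrow> 's) \<Rightarrow> nat \<Rightarrow> 'ag \<Rightarrow> 'm" where
  "path_moves G u i = (SOME \<sigma>. trans G (u i) \<sigma> = u (Suc i))"

text \<open>A history of length i + 1 ends at time i, so the replayed move is the one
  taken at step i of u.\<close>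
definition replay :: "('s,'ag,'m,'ap) mscgs \<Rightarrow> (nat \<Rightarrow> 's) \<Rightarrow> 'ag \<Rightarrow> ('s,'ag,'m) strategy" where
  "replay G u = (\<lambda>x h _. path_moves G u (length h - 1) x)"

lemma trans_path_moves:
  assumes "is_path G u"
  shows "trans G (u i) (path_moves G u i) = u (Suc i)"
  using assms unfolding is_path_def path_moves_def by (metis (mono_tags, lifting) someI_ex)

lemma is_path_if_in_out: "t \<in> out G s A F \<Longrightarrow> is_path G t"
  by (auto simp: out_def is_path_def)

lemma out_empty_iff: "t \<in> out G s {} F \<longleftrightarrow> t 0 = s \<and> is_path G t"
  by (simp add: out_def is_path_def)

lemma out_replay_step:
  assumes "t \<in> out G s A (replay G u)" and "x \<in> A"
  obtains \<sigma> where "trans G (t i) \<sigma> = t (Suc i)" and "\<sigma> x = path_moves G u i x"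
proof -
  obtain \<sigma> where "trans G (t i) \<sigma> = t (Suc i)"
    and "\<forall>x\<in>A. \<sigma> x = replay G u x (map t [0..<Suc i]) (lower_moves G x \<sigma>)"
    using assms(1) unfolding out_def by blast
  then show ?thesis using that assms(2) by (simp add: replay_def)
qed

lemma out_UNIV_replay:
  fixes G :: "('s::finite,'ag::finite,'m::finite,'ap) mscgs"
  assumes "is_path G u"
  shows "out G (u 0) UNIV (replay G u) = {u}"
proof
  show "out G (u 0) UNIV (replay G u) \<subseteq> {u}"
  proof
    fix t assume t: "t \<in> out G (u 0) UNIV (replay G u)"
    have "t i = u i" for i
    proof (induction i)
      case 0
      then show ?case using t by (simp add: out_def)
    next
      case (Suc i)
      obtain \<sigma> where "trans G (t i) \<sigma> = t (Suc i)"
        and "\<And>x. \<sigma> x = path_moves G u i x"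
        using t by (force simp: out_def replay_def)
      then show ?case using Suc trans_path_moves[OF assms] by (metis ext)
    qed
    then show "t \<in> {u}" by auto
  qed
  have "\<forall>x\<in>UNIV. path_moves G u i x = replay G u x (map u [0..<Suc i]) \<tau>" for i \<tau>
    by (simp add: replay_def)
  then show "{u} \<subseteq> out G (u 0) UNIV (replay G u)"
    unfolding out_def using trans_path_moves[OF assms] by blast
qed

lemma exists_q_if_path:
  fixes G :: "('s::finite,'ag::finite,'m::finite,'ap) mscgs"
  assumes "is_path G t" and "t 0 = recent_start G \<Pi>" and "\<phi> (t # \<Pi>)"
  shows "exists_q G \<phi> \<Pi>"
  unfolding exists_q_def strat_q_def
  using out_UNIV_replay[OF assms(1)] assms(2,3) by (metis singletonD)

lemma forall_q_iff:
  fixes G :: "('s::finite,'ag::finite,'m::finite,'ap) mscgs"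
  shows "forall_q G \<phi> \<Pi> \<longleftrightarrow> (\<forall>t. t 0 = recent_start G \<Pi> \<and> is_path G t \<longrightarrow> \<phi> (t # \<Pi>))"
  by (auto simp: forall_q_def strat_q_def out_empty_iff)

lemma out_replay_labels_agree:
  assumes owned: "\<And>s \<sigma>. lab G (trans G s \<sigma>) \<inter> P = g (\<sigma> x)"
    and u: "is_path G u"
    and t: "t \<in> out G s A (replay G u)" and "x \<in> A"
    and start: "lab G (t 0) \<inter> P = lab G (u 0) \<inter> P"
  shows "lab G (t i) \<inter> P = lab G (u i) \<inter> P"
proof (cases i)
  case 0
  then show ?thesis using start by simp
next
  case (Suc j)
  obtain \<sigma> where "trans G (t j) \<sigma> = t (Suc j)" and "\<sigma> x = path_moves G u j x"
    using out_replay_step[OF t \<open>x \<in> A\<close>] by blast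
  then show ?thesis
    using Suc owned[of "t j" \<sigma>] owned[of "u j" "path_moves G u j"] trans_path_moves[OF u]
    by simp
qed

lemma models_NDS_imp_indistinguishable_outcome:
  fixes G :: "('s::finite,'ag::finite,'m::finite,'ap) mscgs"
  assumes "models_NDS G xH L Obs" and "is_path G p" and "p 0 = init G"
  obtains t where "t \<in> out G (init G) {xH} F"
    and "\<forall>i. \<forall>a\<in>L. (a \<in> lab G (p i)) = (a \<in> lab G (t i))"
    and "\<forall>i. \<forall>a\<in>Obs. (a \<in> lab G (p i)) = (a \<in> lab G (t i))"
proof -
  have "\<not> strat_q G {xH} (\<lambda>\<Pi>. let t1 = \<Pi> ! 1; t2 = \<Pi> ! 0 in
         (\<forall>i. \<forall>a\<in>L. (a \<in> lab G (t1 i)) = (a \<in> lab G (t2 i))) \<longrightarrow>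
         (\<exists>i. \<exists>a\<in>Obs. (a \<in> lab G (t1 i)) \<noteq> (a \<in> lab G (t2 i)))) [p]"
    using assms exists_q_if_path[of G p "[]"] by (auto simp: models_NDS_def recent_start_def)
  then have "\<exists>t\<in>out G (init G) {xH} F.
      (\<forall>i. \<forall>a\<in>L. (a \<in> lab G (p i)) = (a \<in> lab G (t i))) \<and>
      (\<forall>i. \<forall>a\<in>Obs. (a \<in> lab G (p i)) = (a \<in> lab G (t i)))"
    using assms(3) unfolding strat_q_def recent_start_def by simp
  then show ?thesis
    using that by blast
qed

lemma models_GNI_if_witness:
  fixes G :: "('s::finite,'ag::finite,'m::finite,'ap) mscgs"
  assumes "\<And>p1 p2. \<lbrakk>is_path G p1; p1 0 = init G; is_path G p2; p2 0 = init G\<rbrakk> \<Longrightarrow>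
      \<exists>t. is_path G t \<and> t 0 = init G \<and>
        (\<forall>i. \<forall>a\<in>H. (a \<in> lab G (p1 i)) = (a \<in> lab G (t i))) \<and>
        (\<forall>i. \<forall>a\<in>Obs. (a \<in> lab G (p2 i)) = (a \<in> lab G (t i)))"
  shows "models_GNI G H Obs"
  unfolding models_GNI_def forall_q_iff
proof (intro allI impI, elim conjE)
  fix p1 p2
  assume "p1 0 = recent_start G []" "is_path G p1" "p2 0 = recent_start G [p1]" "is_path G p2"
  then have p1: "is_path G p1" "p1 0 = init G" and p2: "is_path G p2" "p2 0 = init G"
    by (simp_all add: recent_start_def)
  obtain t where "is_path G t" "t 0 = init G"
    "\<forall>i. \<forall>a\<in>H. (a \<in> lab G (p1 i)) = (a \<in> lab G (t i))"
    "\<forall>i. \<forall>a\<in>Obs. (a \<in> lab G (p2 i)) = (a \<in> lab G (t i))"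
    using assms[OF p1 p2] by blast
  then show "exists_q G (\<lambda>\<Pi>. let t1 = \<Pi> ! 2; t2 = \<Pi> ! 1; t3 = \<Pi> ! 0 in
         (\<forall>i. \<forall>a\<in>H. (a \<in> lab G (t1 i)) = (a \<in> lab G (t3 i))) \<and>
         (\<forall>i. \<forall>a\<in>Obs. (a \<in> lab G (t2 i)) = (a \<in> lab G (t3 i)))) [p2, p1]"
    using p2(2) by (intro exists_q_if_path[where t = t]) (simp_all add: recent_start_def numeral_2_eq_2)
qed

theorem lemma4p3:
  fixes G :: "('s::finite, 'ag::finite, 'm::finite, 'ap) mscgs"
  assumes "is_system G xN xH xL H L Obs"
    and "models_NDS G xH L Obs"
  shows "models_GNI G H Obs"
proof (rule models_GNI_if_witness)
  fix p1 p2
  assume p1: "is_path G p1" "p1 0 = init G" and p2: "is_path G p2" "p2 0 = init G"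
  obtain g where owned: "\<And>s \<sigma>. lab G (trans G s \<sigma>) \<inter> H = g (\<sigma> xH)"
    using assms(1) unfolding is_system_def by blast
  obtain t where t: "t \<in> out G (init G) {xH} (replay G p1)"
    and "\<forall>i. \<forall>a\<in>L. (a \<in> lab G (p2 i)) = (a \<in> lab G (t i))"
    and obs: "\<forall>i. \<forall>a\<in>Obs. (a \<in> lab G (p2 i)) = (a \<in> lab G (t i))"
    by (rule models_NDS_imp_indistinguishable_outcome[OF assms(2) p2])
  have t0: "t 0 = init G" using t by (simp add: out_def)
  have "lab G (t i) \<inter> H = lab G (p1 i) \<inter> H" for i
    by (rule out_replay_labels_agree[OF owned p1(1) t singletonI]) (simp add: t0 p1(2))
  then have "\<forall>i. \<forall>a\<in>H. (a \<in> lab G (p1 i)) = (a \<in> lab G (t i))" by blast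
  with is_path_if_in_out[OF t] t0 obs show "\<exists>t. is_path G t \<and> t 0 = init G \<and>
      (\<forall>i. \<forall>a\<in>H. (a \<in> lab G (p1 i)) = (a \<in> lab G (t i))) \<and>
      (\<forall>i. \<forall>a\<in>Obs. (a \<in> lab G (p2 i)) = (a \<in> lab G (t i)))"
    by blast
qed

end
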